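(* Let $\mathcal{T}$ be a $K$-decomposition of a matroid $\mathcal{M}$ with rank function $r$, $K\ge1$, and let $v$ be a node of $\mathcal{T}$. Let $E_v$ be the set of elements of $\mathcal{M}$ corresponding to the leaves of the subtree of $\mathcal{T}$ rooted at $v$, and $\overline{E_v}$ the set of the remaining elements. If $F_1,F_2\subseteq E_v$ are such that $v$ receives the same color for $F_1$ as for $F_2$, then for every $F\subseteq\overline{E_v}$, $$r(F)+r(F_1)-r(F\cup F_1)=r(F)+r(F_2)-r(F\cup F_2).$$
   Context: A $K$-decomposition ($K\ge1$ an integer) of a matroid $\mathcal{M}$ is a rooted tree $\mathcal{T}$ such that the leaves of $\mathcal{T}$ correspond one-to-one to the elements of $\mathcal{M}$ and record whether the corresponding element is a loop, and each inner node $v$ has exactly two children and is equipped with functions $\varphi_v:\{0,\dots,K\}^2\to\{0,\dots,K\}$ and $\varphi_v^r:\{0,\dots,K\}^2\to\mathbb{N}$. For a subset $F$ of the ground set, color and label the nodes as follows: a leaf whose element is in $F$ gets color $1$, other leaves color $0$; a leaf whose element is in $F$ and is not a loop gets label $1$, other leaves label $0$; an inner node $v$ whose two children have colors $\gamma_1,\gamma_2$ and labels $\lambda_1,\lambda_2$ gets color $\varphi_v(\gamma_1,\gamma_2)$ and label $\lambda_1+\lambda_2-\varphi_v^r(\gamma_1,\gamma_2)$. It is required that for every $F$ the label of the root equals $r(F)$, and that for $F=\emptyset$ all nodes get color $0$ and label $0$. "The color of $v$ for $F$" means the color given to $v$ by this procedure applied to $F$. *)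

theory Defs
  imports Main
begin

definition matroid :: "'a set \<Rightarrow> ('a set \<Rightarrow> nat) \<Rightarrow> bool" where
  "matroid E r \<longleftrightarrow> finite E
     \<and> (\<forall>A. A \<subseteq> E \<longrightarrow> r A \<le> card A)
     \<and> (\<forall>A B. A \<subseteq> B \<and> B \<subseteq> E \<longrightarrow> r A \<le> r B)
     \<and> (\<forall>A B. A \<subseteq> E \<and> B \<subseteq> E \<longrightarrow> r (A \<union> B) + r (A \<inter> B) \<le> r A + r B)"

definition is_loop :: "('a set \<Rightarrow> nat) \<Rightarrow> 'a \<Rightarrow> bool" where
  "is_loop r e \<longleftrightarrow> r {e} = 0"

text \<open>Decomposition trees: a leaf records an element and whether it is a loop;
  an inner node carries the colour function phi and the rank-correction function phi^r.\<close>
datatype 'a dtree =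
    DLeaf 'a bool
  | DNode "nat \<Rightarrow> nat \<Rightarrow> nat" "nat \<Rightarrow> nat \<Rightarrow> nat" "'a dtree" "'a dtree"

fun leaf_list :: "'a dtree \<Rightarrow> 'a list" where
  "leaf_list (DLeaf e b) = [e]"
| "leaf_list (DNode f g l r) = leaf_list l @ leaf_list r"

abbreviation leaf_elems :: "'a dtree \<Rightarrow> 'a set" where
  "leaf_elems t \<equiv> set (leaf_list t)"

fun leaf_data :: "'a dtree \<Rightarrow> ('a \<times> bool) set" where
  "leaf_data (DLeaf e b) = {(e, b)}"
| "leaf_data (DNode f g l r) = leaf_data l \<union> leaf_data r"

text \<open>All nodes of the tree (each node identified with the subtree rooted at it).\<close>
fun nodes :: "'a dtree \<Rightarrow> 'a dtree set" where
  "nodes (DLeaf e b) = {DLeaf e b}"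
| "nodes (DNode f g l r) = insert (DNode f g l r) (nodes l \<union> nodes r)"

fun inner_funs :: "'a dtree \<Rightarrow> ((nat \<Rightarrow> nat \<Rightarrow> nat) \<times> (nat \<Rightarrow> nat \<Rightarrow> nat)) set" where
  "inner_funs (DLeaf e b) = {}"
| "inner_funs (DNode f g l r) = insert (f, g) (inner_funs l \<union> inner_funs r)"

fun color :: "'a dtree \<Rightarrow> 'a set \<Rightarrow> nat" where
  "color (DLeaf e b) F = (if e \<in> F then 1 else 0)"
| "color (DNode f g l r) F = f (color l F) (color r F)"

fun label :: "'a dtree \<Rightarrow> 'a set \<Rightarrow> int" where
  "label (DLeaf e b) F = (if e \<in> F \<and> \<not> b then 1 else 0)"
| "label (DNode f g l r) F =
     label l F + label r F - int (g (color l F) (color r F))"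

definition K_decomposition :: "nat \<Rightarrow> 'a set \<Rightarrow> ('a set \<Rightarrow> nat) \<Rightarrow> 'a dtree \<Rightarrow> bool" where
  "K_decomposition K E r T \<longleftrightarrow>
     distinct (leaf_list T) \<and> leaf_elems T = E
   \<and> (\<forall>(e, b) \<in> leaf_data T. b = is_loop r e)
   \<and> (\<forall>(f, g) \<in> inner_funs T. \<forall>a \<le> K. \<forall>c \<le> K. f a c \<le> K)
   \<and> (\<forall>F. F \<subseteq> E \<longrightarrow> label T F = int (r F))
   \<and> (\<forall>v \<in> nodes T. color v {} = 0 \<and> label v {} = 0)"

end

theory Submission
  imports Defs
begin

(* The colour and the label of a subtree t for a set A depend only on
   A \<inter> E_t, the part of A lying at the leaves of t.  Now fix the node v and sets
   Y1, Y2 \<subseteq> E_v with equal colour at v, and a set X disjoint from E_v.  Walking up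
   from v to the root, every node u on that path sees the same colour for X \<union> Y1
   as for X \<union> Y2 and for Y1 as for Y2 (the sibling subtree off the path does not
   see Y1, Y2 at all), and the label difference label u (X \<union> Yi) - label u Yi is
   independent of i, because the correction terms phi^r agree.  At the root the
   labels are ranks, which gives r(X \<union> Y1) - r(Y1) = r(X \<union> Y2) - r(Y2); the
   theorem is this identity with r(F) added on both sides.  No matroid axioms are
   needed: only the distinctness of the leaves and the rank property of the root. *)

lemma color_label_local:
  "A \<inter> leaf_elems t = B \<inter> leaf_elems t \<Longrightarrow> color t A = color t B \<and> label t A = label t B"
proof (induction t)
  case (DLeaf e b)
  then show ?case by auto
next
  case (DNode f g l r)
  have "A \<inter> leaf_elems l = B \<inter> leaf_elems l" "A \<inter> leaf_elems r = B \<inter> leaf_elems r"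
    using DNode.prems by auto
  with DNode.IH show ?case by simp
qed

lemma color_label_ignore:
  assumes "Y \<inter> leaf_elems t = {}"
  shows "color t (X \<union> Y) = color t X \<and> label t (X \<union> Y) = label t X"
  by (rule color_label_local) (use assms in auto)

lemma leaf_elems_node: "v \<in> nodes t \<Longrightarrow> leaf_elems v \<subseteq> leaf_elems t"
  by (induction t) auto

lemma color_label_transfer:
  assumes "v \<in> nodes t" and "distinct (leaf_list t)"
    and "Y1 \<subseteq> leaf_elems v" and "Y2 \<subseteq> leaf_elems v" and "color v Y1 = color v Y2"
    and "X \<inter> leaf_elems v = {}"
  shows "color t (X \<union> Y1) = color t (X \<union> Y2) \<and> color t Y1 = color t Y2
    \<and> label t (X \<union> Y1) - label t Y1 = label t (X \<union> Y2) - label t Y2"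
  using assms
proof (induction t)
  case (DLeaf e b)
  then show ?case by auto
next
  case (DNode f g l r)
  have disjoint: "leaf_elems l \<inter> leaf_elems r = {}"
    using DNode.prems(2) by auto
  consider "v = DNode f g l r" | "v \<in> nodes l" | "v \<in> nodes r"
    using DNode.prems(1) by auto
  then show ?case
  proof cases
    case 1
    \<comment> \<open>At v itself only the parts inside E_v matter, and X has none.\<close>
    have "(X \<union> Y1) \<inter> leaf_elems v = Y1 \<inter> leaf_elems v"
         "(X \<union> Y2) \<inter> leaf_elems v = Y2 \<inter> leaf_elems v"
      using DNode.prems(6) by auto
    from this[THEN color_label_local]
    have "color v (X \<union> Y1) = color v (X \<union> Y2) \<and> color v Y1 = color v Y2
        \<and> label v (X \<union> Y1) - label v Y1 = label v (X \<union> Y2) - label v Y2"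
      using DNode.prems(5) by simp
    with 1 show ?thesis
      by blast
  next
    case 2
    \<comment> \<open>v lies below l: apply the induction hypothesis there; r does not see Y1, Y2.\<close>
    have IH: "color l (X \<union> Y1) = color l (X \<union> Y2) \<and> color l Y1 = color l Y2
        \<and> label l (X \<union> Y1) - label l Y1 = label l (X \<union> Y2) - label l Y2"
      using 2 DNode.prems(2-6) by (intro DNode.IH(1)) auto
    have "Y1 \<inter> leaf_elems r = {}" "Y2 \<inter> leaf_elems r = {}"
      using leaf_elems_node[OF 2] DNode.prems(3,4) disjoint by auto
    from this[THEN color_label_ignore, of X] this[THEN color_label_ignore, of "{}"]
    show ?thesis
      using IH by simp
  next
    case 3
    have IH: "color r (X \<union> Y1) = color r (X \<union> Y2) \<and> color r Y1 = color r Y2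
        \<and> label r (X \<union> Y1) - label r Y1 = label r (X \<union> Y2) - label r Y2"
      using 3 DNode.prems(2-6) by (intro DNode.IH(2)) auto
    have "Y1 \<inter> leaf_elems l = {}" "Y2 \<inter> leaf_elems l = {}"
      using leaf_elems_node[OF 3] DNode.prems(3,4) disjoint by auto
    from this[THEN color_label_ignore, of X] this[THEN color_label_ignore, of "{}"]
    show ?thesis
      using IH by simp
  qed
qed

theorem lemma6:
  fixes K :: nat and E :: "'a set" and r :: "'a set \<Rightarrow> nat" and T v :: "'a dtree"
    and F F1 F2 :: "'a set"
  assumes "K \<ge> 1"
    and "matroid E r"
    and "K_decomposition K E r T"
    and "v \<in> nodes T"
    and "F1 \<subseteq> leaf_elems v" and "F2 \<subseteq> leaf_elems v"
    and "color v F1 = color v F2"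
    and "F \<subseteq> E - leaf_elems v"
  shows "int (r F) + int (r F1) - int (r (F \<union> F1))
       = int (r F) + int (r F2) - int (r (F \<union> F2))"
proof -
  have distinct: "distinct (leaf_list T)" and leaves: "leaf_elems T = E"
    and rank: "\<And>A. A \<subseteq> E \<Longrightarrow> label T A = int (r A)"
    using assms(3) unfolding K_decomposition_def by auto
  have "leaf_elems v \<subseteq> E"
    using leaf_elems_node[OF assms(4)] leaves by simp
  then have subsets: "F \<union> F1 \<subseteq> E" "F \<union> F2 \<subseteq> E" "F1 \<subseteq> E" "F2 \<subseteq> E"
    using assms(5,6,8) by auto
  have "F \<inter> leaf_elems v = {}"
    using assms(8) by auto
  then have "label T (F \<union> F1) - label T F1 = label T (F \<union> F2) - label T F2"
    using color_label_transfer[OF assms(4) distinct assms(5-7)] by simp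
  then show ?thesis
    using rank[OF subsets(1)] rank[OF subsets(2)] rank[OF subsets(3)] rank[OF subsets(4)]
    by simp
qed

end
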